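(* Let $\alpha_1\ge\alpha_2\ge\dots>0$ with $\sum_n\alpha_n<\infty$, set $R_n=\sum_{i=n+1}^\infty\alpha_i$ for $n\ge0$, and assume $\alpha_n>R_n$ for every $n\ge1$. Let $\rho$ be the law of $\sum_{j=1}^\infty\varepsilon_j\alpha_j$, where $(\varepsilon_j)$ are i.i.d. with $\mathbb P[\varepsilon_j=1]=\mathbb P[\varepsilon_j=-1]=\frac12$ (equivalently, the infinite convolution of the measures $\frac12(\delta_{\alpha_n}+\delta_{-\alpha_n})$). Then for every integer $n\ge0$: (i) if $I$ is an interval of length $|I|<R_n$, then $\rho(I)\le2^{-n}$; (ii) if $\delta>0$ and $R_n<\frac\delta4$, then $\rho((\lambda-\delta,\lambda+\delta))\ge2^{-n}$ for every $\lambda$ in the support of $\rho$. *)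

theory Defs
  imports "HOL-Probability.Probability"
begin

text \<open>Probability space of i.i.d. signs eps_1, eps_2, ... (coordinate 0 is unused),
  each uniform on {-1, 1}.\<close>
definition sign_space :: "(nat \<Rightarrow> real) measure" where
  "sign_space = (\<Pi>\<^sub>M j\<in>(UNIV::nat set). measure_pmf (pmf_of_set {-1::real, 1}))"

definition sign_series_law :: "(nat \<Rightarrow> real) \<Rightarrow> real measure" where
  "sign_series_law \<alpha> = distr sign_space borel (\<lambda>\<epsilon>. \<Sum>j. \<epsilon> (Suc j) * \<alpha> (Suc j))"

definition tail_sum :: "(nat \<Rightarrow> real) \<Rightarrow> nat \<Rightarrow> real" where
  "tail_sum \<alpha> n = (\<Sum>i. \<alpha> (n + 1 + i))"

definition measure_support :: "'a::topological_space measure \<Rightarrow> 'a set" where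
  "measure_support M = {x. \<forall>U. open U \<and> x \<in> U \<longrightarrow> emeasure M U > 0}"

end

theory Submission
  imports Defs
begin

(* Write the sign series as S = P_n + T_n, with P_n the sum of the first n signed terms and
   T_n the tail.  Because alpha_k > R_k, the tail T_n has the sign of eps_(n+1) and modulus at
   most R_n, while sign sequences with different first n signs have partial sums P_n more than
   2 R_n apart.  Hence two sign sequences whose sums are closer than R_n and which agree at
   position n+1 agree at all positions up to n+1: a set of diameter less than R_n is hit, up to
   a null set, by at most two cylinders of length n+1, of total mass 2^-n.  Conversely, a point
   of the support lies within delta/2 of some sum S(c), and the whole cylinder of length n
   around c, of mass 2^-n, is mapped within 2 R_n < delta/2 of S(c). *)

interpretation signs: product_prob_space "\<lambda>_::nat. measure_pmf (pmf_of_set {-1::real, 1})" UNIV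
  by (intro product_prob_spaceI prob_space_measure_pmf)

lemma prob_space_sign_space: "prob_space sign_space"
  unfolding sign_space_def by (rule signs.P.prob_space_axioms)

lemma space_sign_space [simp]: "space sign_space = UNIV"
  by (simp add: sign_space_def space_PiM)

definition sign_sequence :: "(nat \<Rightarrow> real) \<Rightarrow> bool" where
  "sign_sequence e \<longleftrightarrow> (\<forall>j. e j \<in> {-1, 1})"

lemma sign_sequenceD: "sign_sequence e \<Longrightarrow> e j = -1 \<or> e j = 1"
  by (auto simp: sign_sequence_def)

lemma abs_sign_sequence: "sign_sequence e \<Longrightarrow> \<bar>e j\<bar> = 1"
  using sign_sequenceD[of e j] by auto

definition cylinder :: "nat \<Rightarrow> (nat \<Rightarrow> real) \<Rightarrow> (nat \<Rightarrow> real) set" where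
  "cylinder m e = {x. \<forall>j\<in>{1..m}. x j = e j}"

lemma cylinder_Suc: "cylinder (Suc n) e = {x \<in> cylinder n e. x (Suc n) = e (Suc n)}"
  by (auto simp: cylinder_def le_Suc_eq)

lemma AE_sign_sequence: "AE e in sign_space. sign_sequence e"
  unfolding sign_sequence_def
proof (subst AE_all_countable, intro allI)
  fix j :: nat
  let ?N = "{x. x j \<in> - {-1, 1::real}}"
  have "?N \<in> sets sign_space"
    using sets_Collect_single'[of j UNIV "\<lambda>_. measure_pmf (pmf_of_set {-1::real, 1})" "\<lambda>x. x \<in> - {-1, 1}"]
    by (simp add: sign_space_def space_PiM)
  moreover have "emeasure sign_space ?N = emeasure (measure_pmf (pmf_of_set {-1::real, 1})) (- {-1, 1})"
    using signs.emeasure_PiM_Collect_single[of j "- {-1, 1}"] by (simp add: sign_space_def space_PiM)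
  moreover have "\<dots> = 0"
    by (simp add: measure_pmf.emeasure_eq_measure measure_pmf_zero_iff)
  ultimately show "AE e in sign_space. e j \<in> {-1, 1}"
    by (intro AE_I'[of ?N]) auto
qed

lemma cylinder_eq_prod_emb:
  "cylinder m e = prod_emb UNIV (\<lambda>_. measure_pmf (pmf_of_set {-1::real, 1})) {1..m} (\<Pi>\<^sub>E j\<in>{1..m}. {e j})"
  by (auto simp: cylinder_def prod_emb_def PiE_iff space_PiM)

lemma cylinder_in_sets: "cylinder m e \<in> sets sign_space"
  unfolding cylinder_eq_prod_emb sign_space_def by (rule sets_PiM_I) auto

lemma measure_cylinder:
  assumes "sign_sequence e"
  shows "measure sign_space (cylinder m e) = (1/2) ^ m"
proof -
  have "measure sign_space (cylinder m e) = (\<Prod>j\<in>{1..m}. measure (measure_pmf (pmf_of_set {-1::real, 1})) {e j})"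
    unfolding cylinder_eq_prod_emb sign_space_def by (rule signs.measure_PiM_emb) auto
  also have "\<dots> = (\<Prod>j\<in>{1..m}. 1/2)"
    using assms by (intro prod.cong) (auto simp: sign_sequence_def measure_pmf_single pmf_of_set)
  finally show ?thesis by simp
qed

definition sign_sum :: "(nat \<Rightarrow> real) \<Rightarrow> (nat \<Rightarrow> real) \<Rightarrow> real" where
  "sign_sum \<alpha> e = (\<Sum>j. e (Suc j) * \<alpha> (Suc j))"

definition sign_prefix_sum :: "(nat \<Rightarrow> real) \<Rightarrow> nat \<Rightarrow> (nat \<Rightarrow> real) \<Rightarrow> real" where
  "sign_prefix_sum \<alpha> n e = (\<Sum>j<n. e (Suc j) * \<alpha> (Suc j))"

definition sign_tail_sum :: "(nat \<Rightarrow> real) \<Rightarrow> nat \<Rightarrow> (nat \<Rightarrow> real) \<Rightarrow> real" where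
  "sign_tail_sum \<alpha> n e = (\<Sum>i. e (n + 1 + i) * \<alpha> (n + 1 + i))"

lemma sign_prefix_sum_Suc:
  "sign_prefix_sum \<alpha> (Suc n) e = sign_prefix_sum \<alpha> n e + e (Suc n) * \<alpha> (Suc n)"
  by (simp add: sign_prefix_sum_def)

lemma sign_prefix_sum_cylinder: "e' \<in> cylinder n e \<Longrightarrow> sign_prefix_sum \<alpha> n e' = sign_prefix_sum \<alpha> n e"
  unfolding sign_prefix_sum_def cylinder_def by (intro sum.cong) auto

lemma sign_series_law_eq: "sign_series_law \<alpha> = distr sign_space borel (sign_sum \<alpha>)"
  by (simp add: sign_series_law_def sign_sum_def[abs_def])

lemma measurable_sign_sum [measurable]: "sign_sum \<alpha> \<in> borel_measurable sign_space"
  unfolding sign_sum_def[abs_def] sign_space_def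
  by (intro borel_measurable_suminf borel_measurable_times borel_measurable_const
      measurable_compose[OF measurable_component_singleton]) auto

locale dominated_sign_series =
  fixes \<alpha> :: "nat \<Rightarrow> real"
  assumes pos: "\<And>k. k \<ge> 1 \<Longrightarrow> \<alpha> k > 0"
    and summable: "summable (\<lambda>k. \<alpha> (Suc k))"
    and dominates_tail: "\<And>k. k \<ge> 1 \<Longrightarrow> \<alpha> k > tail_sum \<alpha> k"
begin

lemma summable_tail: "summable (\<lambda>i. \<alpha> (n + 1 + i))"
  using summable_ignore_initial_segment[OF summable, of n] by (simp add: add.commute)

lemma tail_sum_Suc: "tail_sum \<alpha> n = \<alpha> (Suc n) + tail_sum \<alpha> (Suc n)"
  using suminf_split_head[OF summable_tail[of n]] by (simp add: tail_sum_def)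

lemma abs_sign_mult:
  assumes "sign_sequence e" "k \<ge> 1"
  shows "\<bar>e k * \<alpha> k\<bar> = \<alpha> k"
  using assms pos[of k] by (simp add: abs_mult abs_sign_sequence)

lemma summable_sign_tail:
  assumes "sign_sequence e"
  shows "summable (\<lambda>i. e (n + 1 + i) * \<alpha> (n + 1 + i))"
  by (rule summable_comparison_test'[OF summable_tail[of n], of 0]) (simp add: abs_sign_mult assms)

lemma sign_sum_split:
  assumes "sign_sequence e"
  shows "sign_sum \<alpha> e = sign_prefix_sum \<alpha> n e + sign_tail_sum \<alpha> n e"
  using suminf_split_initial_segment[OF summable_sign_tail[OF assms, of 0], of n]
  by (simp add: sign_sum_def sign_prefix_sum_def sign_tail_sum_def add.commute add.left_commute)

lemma abs_sign_tail_sum_le: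
  assumes "sign_sequence e"
  shows "\<bar>sign_tail_sum \<alpha> n e\<bar> \<le> tail_sum \<alpha> n"
  using summable_norm[of "\<lambda>i. e (n + 1 + i) * \<alpha> (n + 1 + i)"] summable_tail[of n]
  by (simp add: sign_tail_sum_def tail_sum_def abs_sign_mult assms)

lemma sign_tail_sum_Suc:
  assumes "sign_sequence e"
  shows "sign_tail_sum \<alpha> n e = e (Suc n) * \<alpha> (Suc n) + sign_tail_sum \<alpha> (Suc n) e"
  using suminf_split_head[OF summable_sign_tail[OF assms, of n]] by (simp add: sign_tail_sum_def)

lemma sign_tail_sum_sign:
  assumes "sign_sequence e"
  shows "0 < e (Suc n) * sign_tail_sum \<alpha> n e"
proof -
  have sq: "e (Suc n) * e (Suc n) = 1"
    using sign_sequenceD[OF assms, of "Suc n"] by auto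
  have "e (Suc n) * sign_tail_sum \<alpha> n e = \<alpha> (Suc n) + e (Suc n) * sign_tail_sum \<alpha> (Suc n) e"
    using sq by (simp add: sign_tail_sum_Suc[OF assms, of n] distrib_left flip: mult.assoc)
  moreover have "\<bar>e (Suc n) * sign_tail_sum \<alpha> (Suc n) e\<bar> \<le> tail_sum \<alpha> (Suc n)"
    using abs_sign_tail_sum_le[OF assms, of "Suc n"] by (simp add: abs_mult abs_sign_sequence[OF assms])
  ultimately show ?thesis
    using dominates_tail[of "Suc n"] by linarith
qed

lemma sign_prefix_sums_separated:
  assumes "sign_sequence e" "sign_sequence e'" "e' \<notin> cylinder n e"
  shows "2 * tail_sum \<alpha> n < \<bar>sign_prefix_sum \<alpha> n e - sign_prefix_sum \<alpha> n e'\<bar>"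
  using assms(3)
proof (induction n)
  case 0
  then show ?case by (simp add: cylinder_def)
next
  case (Suc n)
  have step: "sign_prefix_sum \<alpha> (Suc n) e - sign_prefix_sum \<alpha> (Suc n) e' =
      (sign_prefix_sum \<alpha> n e - sign_prefix_sum \<alpha> n e') + (e (Suc n) - e' (Suc n)) * \<alpha> (Suc n)"
    by (simp add: sign_prefix_sum_Suc algebra_simps)
  have signs: "e (Suc n) \<in> {-1, 1}" "e' (Suc n) \<in> {-1, 1}"
    using assms(1,2) by (auto simp: sign_sequence_def)
  have dom: "\<alpha> (Suc n) > tail_sum \<alpha> (Suc n)"
    using dominates_tail by simp
  consider "e' \<notin> cylinder n e" | "e' \<in> cylinder n e" "e' (Suc n) \<noteq> e (Suc n)"
    using Suc.prems by (auto simp: cylinder_Suc)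
  then show ?case
  proof cases
    case 1
    with Suc.IH tail_sum_Suc[of n] show ?thesis
      unfolding step using signs pos[of "Suc n"] by auto
  next
    case 2
    then show ?thesis
      unfolding step using signs dom by (auto simp: sign_prefix_sum_cylinder)
  qed
qed

lemma abs_sign_tail_sum_diff_le:
  assumes "sign_sequence a" "sign_sequence b" "a (Suc n) = b (Suc n)"
  shows "\<bar>sign_tail_sum \<alpha> n a - sign_tail_sum \<alpha> n b\<bar> \<le> tail_sum \<alpha> n"
proof -
  let ?\<sigma> = "a (Suc n)"
  have "0 < ?\<sigma> * sign_tail_sum \<alpha> n a" "0 < ?\<sigma> * sign_tail_sum \<alpha> n b"
    using sign_tail_sum_sign[OF assms(1), of n] sign_tail_sum_sign[OF assms(2), of n] assms(3)
    by simp_all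
  moreover have "\<bar>?\<sigma> * sign_tail_sum \<alpha> n a\<bar> \<le> tail_sum \<alpha> n"
    and "\<bar>?\<sigma> * sign_tail_sum \<alpha> n b\<bar> \<le> tail_sum \<alpha> n"
    using abs_sign_tail_sum_le[OF assms(1)] abs_sign_tail_sum_le[OF assms(2)]
    by (simp_all add: abs_mult abs_sign_sequence[OF assms(1)])
  ultimately have "\<bar>?\<sigma> * sign_tail_sum \<alpha> n a - ?\<sigma> * sign_tail_sum \<alpha> n b\<bar> \<le> tail_sum \<alpha> n"
    by linarith
  then show ?thesis
    by (simp flip: right_diff_distrib add: abs_mult abs_sign_sequence[OF assms(1)])
qed

lemma cylinder_of_close_sign_sums:
  assumes "sign_sequence a" "sign_sequence b" "a (Suc n) = b (Suc n)"
    and close: "\<bar>sign_sum \<alpha> a - sign_sum \<alpha> b\<bar> < tail_sum \<alpha> n"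
  shows "b \<in> cylinder (Suc n) a"
proof -
  have "b \<in> cylinder n a"
  proof (rule ccontr)
    assume "b \<notin> cylinder n a"
    then have "2 * tail_sum \<alpha> n < \<bar>sign_prefix_sum \<alpha> n a - sign_prefix_sum \<alpha> n b\<bar>"
      using sign_prefix_sums_separated assms(1,2) by blast
    moreover have "\<bar>sign_tail_sum \<alpha> n a - sign_tail_sum \<alpha> n b\<bar> \<le> tail_sum \<alpha> n"
      using abs_sign_tail_sum_diff_le assms(1-3) .
    ultimately show False
      using close sign_sum_split[OF assms(1), of n] sign_sum_split[OF assms(2), of n] by linarith
  qed
  with assms(3) show ?thesis
    by (simp add: cylinder_Suc)
qed

lemma close_sign_sums_of_cylinder:
  assumes "sign_sequence a" "sign_sequence b" "b \<in> cylinder n a"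
  shows "\<bar>sign_sum \<alpha> a - sign_sum \<alpha> b\<bar> \<le> 2 * tail_sum \<alpha> n"
  using sign_sum_split[OF assms(1), of n] sign_sum_split[OF assms(2), of n]
    sign_prefix_sum_cylinder[OF assms(3), of \<alpha>] abs_sign_tail_sum_le[OF assms(1), of n]
    abs_sign_tail_sum_le[OF assms(2), of n]
  by linarith

lemma measure_sign_series_law_le:
  assumes small: "\<forall>x\<in>I. \<forall>y\<in>I. \<bar>x - y\<bar> < tail_sum \<alpha> n"
  shows "measure (sign_series_law \<alpha>) I \<le> (1/2) ^ n"
proof (cases "I \<in> sets borel")
  case False
  then show ?thesis
    by (simp add: sign_series_law_def measure_notin_sets)
next
  case True
  interpret prob_space sign_space
    by (rule prob_space_sign_space)
  have fibre: "\<exists>c. sign_sequence c \<and>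
      {e. sign_sequence e \<and> sign_sum \<alpha> e \<in> I \<and> e (Suc n) = \<sigma>} \<subseteq> cylinder (Suc n) c" for \<sigma>
  proof (cases "\<exists>c. sign_sequence c \<and> sign_sum \<alpha> c \<in> I \<and> c (Suc n) = \<sigma>")
    case True
    then obtain c where c: "sign_sequence c" "sign_sum \<alpha> c \<in> I" "c (Suc n) = \<sigma>"
      by blast
    have "e \<in> cylinder (Suc n) c" if "sign_sequence e" "sign_sum \<alpha> e \<in> I" "e (Suc n) = \<sigma>" for e
      using cylinder_of_close_sign_sums[of c e n] c that small by simp
    with c(1) show ?thesis
      by blast
  next
    case False
    then show ?thesis
      by (intro exI[of _ "\<lambda>_. 1"]) (auto simp: sign_sequence_def)
  qed
  then obtain p m where
    p: "sign_sequence p" "{e. sign_sequence e \<and> sign_sum \<alpha> e \<in> I \<and> e (Suc n) = 1} \<subseteq> cylinder (Suc n) p"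
    and m: "sign_sequence m" "{e. sign_sequence e \<and> sign_sum \<alpha> e \<in> I \<and> e (Suc n) = -1} \<subseteq> cylinder (Suc n) m"
    using fibre[of 1] fibre[of "-1"] by blast
  have "AE e in sign_space.
      e \<in> sign_sum \<alpha> -` I \<inter> space sign_space \<longrightarrow> e \<in> cylinder (Suc n) p \<union> cylinder (Suc n) m"
    using AE_sign_sequence
  proof eventually_elim
    case (elim e)
    then show ?case
      using p(2) m(2) sign_sequenceD[OF elim, of "Suc n"] by blast
  qed
  then have "measure sign_space (sign_sum \<alpha> -` I \<inter> space sign_space) \<le>
      measure sign_space (cylinder (Suc n) p \<union> cylinder (Suc n) m)"
    by (rule finite_measure_mono_AE) (intro sets.Un cylinder_in_sets)
  also have "\<dots> \<le> measure sign_space (cylinder (Suc n) p) + measure sign_space (cylinder (Suc n) m)"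
    by (intro measure_Un_le cylinder_in_sets)
  also have "\<dots> = (1/2) ^ n"
    using p(1) m(1) by (simp add: measure_cylinder)
  finally show ?thesis
    by (simp add: sign_series_law_eq measure_distr True)
qed

lemma measure_sign_series_law_ball_ge:
  assumes "0 < \<delta>" "tail_sum \<alpha> n < \<delta> / 4" and x: "x \<in> measure_support (sign_series_law \<alpha>)"
  shows "(1/2) ^ n \<le> measure (sign_series_law \<alpha>) {x - \<delta> <..< x + \<delta>}"
proof -
  interpret prob_space sign_space
    by (rule prob_space_sign_space)
  let ?U = "{x - \<delta>/2 <..< x + \<delta>/2}" and ?W = "{x - \<delta> <..< x + \<delta>}"
  have "0 < emeasure (sign_series_law \<alpha>) ?U"
    using x \<open>0 < \<delta>\<close> by (simp add: measure_support_def)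
  then have positive: "emeasure sign_space (sign_sum \<alpha> -` ?U) \<noteq> 0"
    by (simp add: sign_series_law_eq emeasure_distr)
  have "\<exists>c. sign_sequence c \<and> sign_sum \<alpha> c \<in> ?U"
  proof (rule ccontr)
    assume none: "\<not> ?thesis"
    have "AE e in sign_space. e \<notin> sign_sum \<alpha> -` ?U"
      using AE_sign_sequence by eventually_elim (use none in auto)
    moreover have "sign_sum \<alpha> -` ?U \<in> sets sign_space"
      using measurable_sets[OF measurable_sign_sum, of ?U \<alpha>] by simp
    ultimately show False
      using positive AE_iff_null_sets null_setsD1 by blast
  qed
  then obtain c where c: "sign_sequence c" "sign_sum \<alpha> c \<in> ?U"
    by blast
  have "AE e in sign_space. e \<in> cylinder n c \<longrightarrow> e \<in> sign_sum \<alpha> -` ?W \<inter> space sign_space"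
    using AE_sign_sequence
  proof eventually_elim
    case (elim e)
    show ?case
    proof
      assume "e \<in> cylinder n c"
      then have "\<bar>sign_sum \<alpha> c - sign_sum \<alpha> e\<bar> \<le> 2 * tail_sum \<alpha> n"
        using close_sign_sums_of_cylinder[OF c(1) elim] by blast
      then show "e \<in> sign_sum \<alpha> -` ?W \<inter> space sign_space"
        using c(2) assms(2) by auto
    qed
  qed
  then have "measure sign_space (cylinder n c) \<le> measure sign_space (sign_sum \<alpha> -` ?W \<inter> space sign_space)"
    by (rule finite_measure_mono_AE) (rule measurable_sets[OF measurable_sign_sum], simp)
  then show ?thesis
    by (simp add: measure_cylinder c(1) sign_series_law_eq measure_distr)
qed

end

theorem lemma6p6:
  fixes \<alpha> :: "nat \<Rightarrow> real" and n :: nat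
  assumes pos: "\<And>k. k \<ge> 1 \<Longrightarrow> \<alpha> k > 0"
    and mono: "\<And>k. k \<ge> 1 \<Longrightarrow> \<alpha> (Suc k) \<le> \<alpha> k"
    and summ: "summable (\<lambda>k. \<alpha> (Suc k))"
    and dom: "\<And>k. k \<ge> 1 \<Longrightarrow> \<alpha> k > tail_sum \<alpha> k"
  shows "(\<forall>I::real set. is_interval I \<and> bounded I \<and> diameter I < tail_sum \<alpha> n
            \<longrightarrow> measure (sign_series_law \<alpha>) I \<le> (1/2) ^ n)
       \<and> (\<forall>\<delta>>0. tail_sum \<alpha> n < \<delta> / 4 \<longrightarrow>
            (\<forall>x\<in>measure_support (sign_series_law \<alpha>).
               measure (sign_series_law \<alpha>) {x - \<delta> <..< x + \<delta>} \<ge> (1/2) ^ n))"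
proof -
  \<comment> \<open>Nor is \<open>is_interval I\<close>: every bounded set of small diameter has small measure.\<close>
  interpret dominated_sign_series \<alpha>
    using pos summ dom by unfold_locales
  have "measure (sign_series_law \<alpha>) I \<le> (1/2) ^ n"
    if "bounded I" "diameter I < tail_sum \<alpha> n" for I :: "real set"
  proof (rule measure_sign_series_law_le, intro ballI)
    fix x y assume "x \<in> I" "y \<in> I"
    then show "\<bar>x - y\<bar> < tail_sum \<alpha> n"
      using diameter_bounded_bound[OF \<open>bounded I\<close>] that(2) by (fastforce simp: dist_real_def)
  qed
  then show ?thesis
    using measure_sign_series_law_ball_ge by auto
qed

end
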